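(* Let $A\in\mathbb{R}^{n\times d}$, let $f:\mathbb{R}^n\to\mathbb{R}\cup\{+\infty\}$ and $g:\mathbb{R}^d\to\mathbb{R}\cup\{+\infty\}$ be closed convex, with $f$ $(1/\gamma)$-smooth ($\gamma\ge0$) and $g$ $\mu$-strongly convex ($\mu\ge0$), and let $R=\|A\|_2$. Consider the iterates of the DAPD method (described in the context) and the functions $\phi_t$ and values $\phi_t^*=\min_{x}\phi_t(x)$ defined in the context. Fix $t\ge0$ and assume $\eta_t(1+B_{t-1}\mu)\ge\beta_t$. Then $$\phi_{t+1}^*-\phi_t^*\ge\beta_t\left(g(\bar{x}^{t+1})+\langle y^{t+1},A\bar{x}^{t+1}\rangle\right)-\frac{\beta_tR^2\eta_t}{2}\|y^{t+1}-y^t\|_2^2.$$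
   Context: $f^*$ is the convex conjugate of $f$; $\operatorname{prox}_h(u)=\arg\min_v\{h(v)+\frac12\|v-u\|_2^2\}$. Convention: $\gamma=0$ means $f$ need not be smooth; $\mu=0$ means $g$ is merely convex. DAPD method: given $x^0\in\mathbb{R}^d$, $y^0\in\mathbb{R}^n$ and positive step sizes $\{\beta_t\},\{\eta_t\},\{\tau_t\}$, set $B_t=\sum_{k=0}^t\beta_k$ (with $B_{-1}=0$) and for $t=0,1,\dots$ compute $\bar{x}^{t+1}=\operatorname{prox}_{\eta_t g}(x^t-\eta_tA^\top y^t)$, $y^{t+1}=\operatorname{prox}_{\tau_t f^*}(y^t+\tau_tA\bar{x}^{t+1})$, $x^{t+1}=\operatorname{prox}_{B_tg}(x^0-\sum_{k=0}^t\beta_kA^\top y^{k+1})$. Potential: $\phi_t(x)=\frac12\|x-x^0\|_2^2+\sum_{k=0}^{t-1}\beta_k\big(g(x)+\langle y^{k+1},Ax\rangle\big)$ (so $\phi_0(x)=\frac12\|x-x^0\|_2^2$), and $\phi_t^*=\min_{x\in\mathbb{R}^d}\phi_t(x)$. *)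

theory Defs
  imports "HOL-Analysis.Analysis" "HOL-Library.Extended_Real"
begin

text \<open>Extended-real-valued functions R^m -> R \<union> {+\<infinity>} are modelled as functions
  into ereal that never take the value -\<infinity>.\<close>

definition proper_fun :: "('a::real_normed_vector \<Rightarrow> ereal) \<Rightarrow> bool" where
  "proper_fun h \<longleftrightarrow> (\<forall>x. h x \<noteq> -\<infinity>) \<and> (\<exists>x. h x \<noteq> \<infinity>)"

definition closed_fun :: "('a::real_normed_vector \<Rightarrow> ereal) \<Rightarrow> bool" where
  "closed_fun h \<longleftrightarrow> closed {(x, z::real). h x \<le> ereal z}"

definition strongly_convex_fun :: "real \<Rightarrow> ('a::real_inner \<Rightarrow> ereal) \<Rightarrow> bool" where
  "strongly_convex_fun mu h \<longleftrightarrow>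
     (\<forall>x y. \<forall>s::real. 0 \<le> s \<and> s \<le> 1 \<longrightarrow>
        h ((1 - s) *\<^sub>R x + s *\<^sub>R y)
          \<le> ereal (1 - s) * h x + ereal s * h y - ereal (mu / 2 * s * (1 - s) * (norm (x - y))\<^sup>2))"

definition convex_fun :: "('a::real_inner \<Rightarrow> ereal) \<Rightarrow> bool" where
  "convex_fun h \<longleftrightarrow> strongly_convex_fun 0 h"

text \<open>(1/gamma)-smoothness; gamma = 0 imposes no smoothness\<close>
definition smooth_fun :: "real \<Rightarrow> ('a::real_inner \<Rightarrow> ereal) \<Rightarrow> bool" where
  "smooth_fun gamma h \<longleftrightarrow>
     (gamma > 0 \<longrightarrow>
        (\<forall>x. h x \<noteq> \<infinity> \<and> h x \<noteq> -\<infinity>) \<and>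
        (\<exists>G. (\<forall>x. ((\<lambda>z. real_of_ereal (h z)) has_derivative (\<lambda>v. G x \<bullet> v)) (at x)) \<and>
             (\<forall>x y. norm (G x - G y) \<le> (1 / gamma) * norm (x - y))))"

definition conj_fun :: "('a::real_inner \<Rightarrow> ereal) \<Rightarrow> 'a \<Rightarrow> ereal" where
  "conj_fun h y = (SUP x. ereal (y \<bullet> x) - h x)"

definition is_prox :: "('a::real_inner \<Rightarrow> ereal) \<Rightarrow> 'a \<Rightarrow> 'a \<Rightarrow> bool" where
  "is_prox h u v \<longleftrightarrow>
     (\<forall>w. h v + ereal ((norm (v - u))\<^sup>2 / 2) \<le> h w + ereal ((norm (w - u))\<^sup>2 / 2))"

definition scale_fun :: "real \<Rightarrow> ('a \<Rightarrow> ereal) \<Rightarrow> 'a \<Rightarrow> ereal" where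
  "scale_fun c h = (\<lambda>x. ereal c * h x)"

definition DAPD_phi ::
  "real^'d^'n \<Rightarrow> (real^'d \<Rightarrow> ereal) \<Rightarrow> (nat \<Rightarrow> real) \<Rightarrow> real^'d \<Rightarrow> (nat \<Rightarrow> real^'n)
     \<Rightarrow> nat \<Rightarrow> real^'d \<Rightarrow> ereal" where
  "DAPD_phi A g beta x0 y t x =
     ereal ((norm (x - x0))\<^sup>2 / 2) + (\<Sum>k<t. ereal (beta k) * (g x + ereal (y (Suc k) \<bullet> (A *v x))))"

definition DAPD_phi_star ::
  "real^'d^'n \<Rightarrow> (real^'d \<Rightarrow> ereal) \<Rightarrow> (nat \<Rightarrow> real) \<Rightarrow> real^'d \<Rightarrow> (nat \<Rightarrow> real^'n)
     \<Rightarrow> nat \<Rightarrow> ereal" where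
  "DAPD_phi_star A g beta x0 y t = (INF x. DAPD_phi A g beta x0 y t x)"

end

theory Submission
  imports Defs
begin

text \<open>The iterate x^t is the proximal point of B_(t-1) g at x^0 - \<Sum>_(k<t) \<beta>_k A^T y^(k+1),
  so it minimises \<phi>_t, which is (1 + B_(t-1) \<mu>)-strongly convex; hence
  \<phi>_t \<ge> \<phi>_t(x^t) + (1 + B_(t-1) \<mu>)/2 |. - x^t|^2. Adding \<beta>_t (g + <y^(t+1), A .>) and using
  \<beta>_t/\<eta>_t times the three-point inequality of the proximal step defining xbar^(t+1), whose
  |. - x^t|^2 term the step condition absorbs, leaves the cross term
  \<beta>_t <y^(t+1) - y^t, A(. - xbar^(t+1))>. Cauchy-Schwarz and Young's inequality bound it by the
  remaining quadratic term and \<beta>_t R^2 \<eta>_t/2 |y^(t+1) - y^t|^2.\<close>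

lemma power2_norm_convex_combination:
  fixes a b :: "'a::real_inner"
  shows "(norm ((1 - s) *\<^sub>R a + s *\<^sub>R b))\<^sup>2
    = (1 - s) * (norm a)\<^sup>2 + s * (norm b)\<^sup>2 - s * (1 - s) * (norm (a - b))\<^sup>2"
  by (simp add: power2_norm_eq_inner inner_add_left inner_add_right inner_diff_left
      inner_diff_right inner_commute algebra_simps)

lemma power2_norm_shift:
  fixes z x w :: "'a::real_inner"
  shows "(norm (z - (x - w)))\<^sup>2 = (norm (z - x))\<^sup>2 + 2 * (w \<bullet> z) - 2 * (w \<bullet> x) + (norm w)\<^sup>2"
  by (simp add: power2_norm_eq_inner inner_add_left inner_add_right inner_diff_left
      inner_diff_right inner_commute algebra_simps)

lemma inner_bounded_linear_le_Young:
  assumes L: "bounded_linear L" and e: "e > 0"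
  shows "d \<bullet> L h \<le> (norm h)\<^sup>2 / (2 * e) + e / 2 * (onorm L * norm d)\<^sup>2"
proof -
  define m where "m = onorm L * norm d"
  have "d \<bullet> L h \<le> norm d * norm (L h)" by (rule norm_cauchy_schwarz)
  also have "\<dots> \<le> norm d * (onorm L * norm h)" by (simp add: mult_left_mono onorm[OF L])
  also have "\<dots> = norm h * m" by (simp add: m_def)
  also have "\<dots> \<le> (norm h)\<^sup>2 / (2 * e) + e / 2 * m\<^sup>2"
  proof -
    have "0 \<le> (norm h - e * m)\<^sup>2" by simp
    with e show ?thesis by (simp add: field_simps power2_eq_square)
  qed
  finally show ?thesis by (simp add: m_def)
qed

lemma prox_scale_finite:
  assumes "proper_fun g" "c > 0" "is_prox (scale_fun c g) u v"
  shows "g v \<noteq> \<infinity>"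
proof
  assume "g v = \<infinity>"
  from assms(1) obtain w where "g w \<noteq> \<infinity>" "g w \<noteq> -\<infinity>" by (auto simp: proper_fun_def)
  with assms(2,3) \<open>g v = \<infinity>\<close> show False
    by (cases "g w") (auto simp: is_prox_def scale_fun_def dest: spec[of _ w])
qed

lemma prox_scale_three_point:
  fixes g :: "'a::real_inner \<Rightarrow> ereal"
  assumes sc: "strongly_convex_fun mu g" and c: "c > 0"
    and prox: "is_prox (scale_fun c g) u v"
    and gv: "g v = ereal a" and gw: "g w = ereal b"
  shows "c * a + (norm (v - u))\<^sup>2 / 2 + (1 + c * mu) / 2 * (norm (w - v))\<^sup>2
    \<le> c * b + (norm (w - u))\<^sup>2 / 2"
proof -
  define D where "D = (norm (w - v))\<^sup>2"
  define N\<^sub>v where "N\<^sub>v = (norm (v - u))\<^sup>2"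
  define N\<^sub>w where "N\<^sub>w = (norm (w - u))\<^sup>2"
  define lhs where "lhs = c * a + N\<^sub>v / 2"
  define rhs where "rhs = c * b + N\<^sub>w / 2"
  \<comment> \<open>compare the prox objective at v with its value at (1 - s)v + sw, then let s tend to 0\<close>
  have bound: "(1 - s) * ((1 + c * mu) / 2 * D) \<le> rhs - lhs" if s01: "0 < s" "s < 1" for s
  proof -
    define p where "p = (1 - s) *\<^sub>R v + s *\<^sub>R w"
    have "g p \<le> ereal (1 - s) * g v + ereal s * g w - ereal (mu / 2 * s * (1 - s) * (norm (v - w))\<^sup>2)"
      using sc s01 unfolding strongly_convex_fun_def p_def by simp
    then have "g p \<le> ereal ((1 - s) * a + s * b - mu / 2 * s * (1 - s) * D)"
      using gv gw by (simp add: D_def norm_minus_commute)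
    moreover have "ereal c * g v + ereal ((norm (v - u))\<^sup>2 / 2)
        \<le> ereal c * g p + ereal ((norm (p - u))\<^sup>2 / 2)"
      using prox by (simp add: is_prox_def scale_fun_def)
    ultimately obtain q where q: "q \<le> (1 - s) * a + s * b - mu / 2 * s * (1 - s) * D"
      and lhs_q: "lhs \<le> c * q + (norm (p - u))\<^sup>2 / 2"
      using c gv by (cases "g p") (auto simp: lhs_def N\<^sub>v_def)
    have "p - u = (1 - s) *\<^sub>R (v - u) + s *\<^sub>R (w - u)" by (simp add: p_def algebra_simps)
    then have pu: "(norm (p - u))\<^sup>2 = (1 - s) * N\<^sub>v + s * N\<^sub>w - s * (1 - s) * D"
      by (simp add: power2_norm_convex_combination N\<^sub>v_def N\<^sub>w_def D_def norm_minus_commute)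
    have "lhs \<le> c * ((1 - s) * a + s * b - mu / 2 * s * (1 - s) * D)
        + ((1 - s) * N\<^sub>v + s * N\<^sub>w - s * (1 - s) * D) / 2"
      using lhs_q mult_left_mono[OF q, of c] c unfolding pu by linarith
    also have "\<dots> = (1 - s) * lhs + s * (rhs - (1 - s) * ((1 + c * mu) / 2 * D))"
      by (simp add: lhs_def rhs_def field_simps)
    finally have "lhs \<le> (1 - s) * lhs + s * (rhs - (1 - s) * ((1 + c * mu) / 2 * D))" .
    then have "s * lhs \<le> s * (rhs - (1 - s) * ((1 + c * mu) / 2 * D))"
      by (simp add: algebra_simps)
    with s01 show ?thesis by (simp add: mult_le_cancel_left_pos)
  qed
  have "(1 + c * mu) / 2 * D \<le> rhs - lhs"
  proof (rule field_le_mult_one_interval)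
    fix z :: real
    assume "0 < z" "z < 1"
    then show "z * ((1 + c * mu) / 2 * D) \<le> rhs - lhs" using bound[of "1 - z"] by simp
  qed
  then show ?thesis by (simp add: lhs_def rhs_def N\<^sub>v_def N\<^sub>w_def D_def)
qed

lemma prox_scale_linearized_three_point:
  fixes g :: "'a::real_inner \<Rightarrow> ereal"
  assumes sc: "strongly_convex_fun mu g" and mu: "mu \<ge> 0" and e: "e > 0"
    and prox: "is_prox (scale_fun e g) (x - e *\<^sub>R a) v"
    and gv: "g v = ereal r\<^sub>v" and gz: "g z = ereal r"
  shows "r\<^sub>v + a \<bullet> v + (norm (z - v))\<^sup>2 / (2 * e) \<le> r + a \<bullet> z + (norm (z - x))\<^sup>2 / (2 * e)"
proof -
  have "e * r\<^sub>v + (norm (v - (x - e *\<^sub>R a)))\<^sup>2 / 2 + (1 + e * mu) / 2 * (norm (z - v))\<^sup>2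
      \<le> e * r + (norm (z - (x - e *\<^sub>R a)))\<^sup>2 / 2"
    by (rule prox_scale_three_point[OF sc e prox gv gz])
  moreover have "(norm (z - v))\<^sup>2 / 2 \<le> (1 + e * mu) / 2 * (norm (z - v))\<^sup>2"
    using e mu by (simp add: field_simps)
  ultimately have "e * r\<^sub>v + e * (a \<bullet> v) + (norm (z - v))\<^sup>2 / 2 \<le> e * r + e * (a \<bullet> z) + (norm (z - x))\<^sup>2 / 2"
    unfolding power2_norm_shift inner_scaleR_left add_divide_distrib diff_divide_distrib
    using zero_le_power2[of "norm (v - x)"] by linarith
  also have "\<dots> = e * (r + a \<bullet> z + (norm (z - x))\<^sup>2 / (2 * e))"
    using e by (simp add: field_simps)
  finally show ?thesis
    using e by (simp add: field_simps)
qed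

lemma prox_scale_dual_step_bound:
  fixes A :: "real^'d^'n" and g :: "real^'d \<Rightarrow> ereal"
  assumes sc: "strongly_convex_fun mu g" and mu: "mu \<ge> 0" and e: "e > 0"
    and prox: "is_prox (scale_fun e g) (x - e *\<^sub>R (transpose A *v y)) v"
    and gv: "g v = ereal r\<^sub>v" and gz: "g z = ereal r"
  shows "r\<^sub>v + y' \<bullet> (A *v v) - (onorm (\<lambda>v. A *v v))\<^sup>2 * e / 2 * (norm (y' - y))\<^sup>2
    \<le> r + y' \<bullet> (A *v z) + (norm (z - x))\<^sup>2 / (2 * e)"
proof -
  have three_point: "r\<^sub>v + y \<bullet> (A *v v) + (norm (z - v))\<^sup>2 / (2 * e)
      \<le> r + y \<bullet> (A *v z) + (norm (z - x))\<^sup>2 / (2 * e)"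
    using prox_scale_linearized_three_point[OF sc mu e prox gv gz] by (simp add: dot_lmul_matrix)
  have young: "(y - y') \<bullet> (A *v (z - v))
      \<le> (norm (z - v))\<^sup>2 / (2 * e) + (onorm (\<lambda>v. A *v v))\<^sup>2 * e / 2 * (norm (y' - y))\<^sup>2"
    using inner_bounded_linear_le_Young[OF matrix_vector_mul_bounded_linear e, of "y - y'" A "z - v"]
      norm_minus_commute[of y y']
    by (simp add: power_mult_distrib mult_ac)
  have "(y - y') \<bullet> (A *v (z - v)) = y \<bullet> (A *v z) - y \<bullet> (A *v v) - y' \<bullet> (A *v z) + y' \<bullet> (A *v v)"
    by (simp add: matrix_vector_mult_diff_distrib inner_diff_left inner_diff_right)
  with three_point young show ?thesis by linarith
qed

lemma DAPD_phi_finite: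
  assumes "g z = ereal r"
  shows "DAPD_phi A g beta x0 y t z
    = ereal ((norm (z - x0))\<^sup>2 / 2 + (\<Sum>k<t. beta k * (r + y (Suc k) \<bullet> (A *v z))))"
  using assms by (simp add: DAPD_phi_def)

lemma DAPD_phi_infinite:
  assumes "g z = \<infinity>" "\<And>k. beta k > 0" "t > 0"
  shows "DAPD_phi A g beta x0 y t z = \<infinity>"
proof -
  have "ereal (beta 0) * (g z + ereal (y (Suc 0) \<bullet> (A *v z))) = \<infinity>"
    using assms(1) assms(2)[of 0] by simp
  with assms(3) show ?thesis by (auto simp: DAPD_phi_def sum_Pinfty)
qed

lemma DAPD_potential_shifted_square:
  fixes A :: "real^'d^'n" and beta :: "nat \<Rightarrow> real" and y :: "nat \<Rightarrow> real^'n" and t :: nat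
  defines "w \<equiv> \<Sum>k<t. beta k *\<^sub>R (transpose A *v y (Suc k))"
  shows "(norm (z - x0))\<^sup>2 / 2 + (\<Sum>k<t. beta k * (r + y (Suc k) \<bullet> (A *v z)))
    = (\<Sum>k<t. beta k) * r + (norm (z - (x0 - w)))\<^sup>2 / 2 + w \<bullet> x0 - (norm w)\<^sup>2 / 2"
proof -
  have "(\<Sum>k<t. beta k * (r + y (Suc k) \<bullet> (A *v z))) = (\<Sum>k<t. beta k) * r + w \<bullet> z"
    by (simp add: w_def distrib_left sum.distrib sum_distrib_left sum_distrib_right
        inner_sum_left dot_lmul_matrix mult.commute)
  then show ?thesis
    unfolding power2_norm_shift add_divide_distrib diff_divide_distrib by simp
qed

lemma DAPD_phi_at_iterate_real:
  fixes A :: "real^'d^'n"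
  assumes g: "proper_fun g" and beta: "\<And>k. beta k > 0"
    and x_def: "\<And>k. is_prox (scale_fun (\<Sum>j\<le>k. beta j) g)
                    (x 0 - (\<Sum>j\<le>k. beta j *\<^sub>R (transpose A *v y (Suc j)))) (x (Suc k))"
  obtains P where "DAPD_phi A g beta (x 0) y t (x t) = ereal P"
proof (cases t)
  case 0
  with that show ?thesis by (simp add: DAPD_phi_def)
next
  case (Suc m)
  have "(\<Sum>j\<le>m. beta j) > 0" using beta by (simp add: sum_pos)
  from prox_scale_finite[OF g this x_def] g obtain a where "g (x t) = ereal a"
    by (cases "g (x t)") (auto simp: Suc proper_fun_def)
  with that show ?thesis by (simp add: DAPD_phi_finite)
qed

lemma DAPD_phi_growth:
  fixes A :: "real^'d^'n"
  assumes g: "proper_fun g" "strongly_convex_fun mu g" and beta: "\<And>k. beta k > 0"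
    and x_def: "\<And>k. is_prox (scale_fun (\<Sum>j\<le>k. beta j) g)
                    (x 0 - (\<Sum>j\<le>k. beta j *\<^sub>R (transpose A *v y (Suc j)))) (x (Suc k))"
  shows "DAPD_phi A g beta (x 0) y t (x t) + ereal ((1 + (\<Sum>k<t. beta k) * mu) / 2 * (norm (z - x t))\<^sup>2)
    \<le> DAPD_phi A g beta (x 0) y t z"
proof (cases t)
  case 0
  then show ?thesis by (simp add: DAPD_phi_def)
next
  case (Suc m)
  define B where "B = (\<Sum>k<t. beta k)"
  define w where "w = (\<Sum>k<t. beta k *\<^sub>R (transpose A *v y (Suc k)))"
  have B: "B > 0" unfolding B_def Suc using beta by (intro sum_pos) auto
  have prox: "is_prox (scale_fun B g) (x 0 - w) (x t)"
    using x_def[of m] by (simp add: B_def w_def Suc lessThan_Suc_atMost)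
  from prox_scale_finite[OF g(1) B prox] g(1) obtain a where ga: "g (x t) = ereal a"
    by (cases "g (x t)") (auto simp: proper_fun_def)
  have "g z \<noteq> -\<infinity>" using g(1) by (simp add: proper_fun_def)
  then consider r where "g z = ereal r" | "g z = \<infinity>" by (cases "g z") auto
  then show ?thesis
  proof cases
    case (1 r)
    have "B * a + (norm (x t - (x 0 - w)))\<^sup>2 / 2 + (1 + B * mu) / 2 * (norm (z - x t))\<^sup>2
        \<le> B * r + (norm (z - (x 0 - w)))\<^sup>2 / 2"
      by (rule prox_scale_three_point[OF g(2) B prox ga 1])
    then show ?thesis
      unfolding DAPD_phi_finite[of g, OF ga] DAPD_phi_finite[of g, OF 1] DAPD_potential_shifted_square
      unfolding B_def[symmetric] w_def[symmetric] by simp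
  next
    case 2
    with beta show ?thesis by (simp add: DAPD_phi_infinite Suc)
  qed
qed

lemma DAPD_phi_Suc_lower_bound:
  fixes A :: "real^'d^'n" and g :: "real^'d \<Rightarrow> ereal"
  assumes g: "proper_fun g" "strongly_convex_fun mu g" "mu \<ge> 0"
    and beta: "\<And>k. beta k > 0" and eta: "eta t > 0"
    and xbar_def: "is_prox (scale_fun (eta t) g) (x t - eta t *\<^sub>R (transpose A *v y t)) (xbar (Suc t))"
    and x_def: "\<And>k. is_prox (scale_fun (\<Sum>j\<le>k. beta j) g)
                    (x 0 - (\<Sum>j\<le>k. beta j *\<^sub>R (transpose A *v y (Suc j)))) (x (Suc k))"
    and step_cond: "eta t * (1 + (\<Sum>k<t. beta k) * mu) \<ge> beta t"
  shows "DAPD_phi A g beta (x 0) y t (x t)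
      + ereal (beta t) * (g (xbar (Suc t)) + ereal (y (Suc t) \<bullet> (A *v xbar (Suc t))))
      - ereal (beta t * (onorm (\<lambda>v. A *v v))\<^sup>2 * eta t / 2 * (norm (y (Suc t) - y t))\<^sup>2)
    \<le> DAPD_phi A g beta (x 0) y (Suc t) z"
proof -
  define xb where "xb = xbar (Suc t)"
  define E\<^sub>0 where "E\<^sub>0 = (onorm (\<lambda>v. A *v v))\<^sup>2 * eta t / 2 * (norm (y (Suc t) - y t))\<^sup>2"
  obtain P where P: "DAPD_phi A g beta (x 0) y t (x t) = ereal P"
    using DAPD_phi_at_iterate_real[OF g(1) beta x_def] .
  from prox_scale_finite[OF g(1) eta xbar_def] g(1) obtain G where G: "g xb = ereal G"
    by (cases "g xb") (auto simp: xb_def proper_fun_def)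
  have "ereal (P + beta t * (G + y (Suc t) \<bullet> (A *v xb)) - beta t * E\<^sub>0)
      \<le> DAPD_phi A g beta (x 0) y (Suc t) z"
  proof -
    have "g z \<noteq> -\<infinity>" using g(1) by (simp add: proper_fun_def)
    then consider r where "g z = ereal r" | "g z = \<infinity>" by (cases "g z") auto
    then show ?thesis
    proof cases
      case (1 r)
      define c where "c = 1 + (\<Sum>k<t. beta k) * mu"
      define D\<^sub>x where "D\<^sub>x = (norm (z - x t))\<^sup>2"
      define \<Phi> where "\<Phi> = (norm (z - x 0))\<^sup>2 / 2 + (\<Sum>k<t. beta k * (r + y (Suc k) \<bullet> (A *v z)))"
      have growth: "P + c / 2 * D\<^sub>x \<le> \<Phi>"
        using DAPD_phi_growth[OF g(1,2) beta x_def, of t z]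
        by (simp add: P DAPD_phi_finite[of g, OF 1] c_def D\<^sub>x_def \<Phi>_def)
      have "G + y (Suc t) \<bullet> (A *v xb) - E\<^sub>0 \<le> r + y (Suc t) \<bullet> (A *v z) + D\<^sub>x / (2 * eta t)"
        using prox_scale_dual_step_bound[OF g(2,3) eta xbar_def[folded xb_def] G 1]
        by (simp add: E\<^sub>0_def D\<^sub>x_def)
      from mult_left_mono[OF this, of "beta t"] beta
      have "beta t * (G + y (Suc t) \<bullet> (A *v xb)) - beta t * E\<^sub>0
          \<le> beta t * (r + y (Suc t) \<bullet> (A *v z)) + beta t * (D\<^sub>x / (2 * eta t))"
        by (simp add: less_imp_le right_diff_distrib distrib_left)
      moreover have "beta t * (D\<^sub>x / (2 * eta t)) \<le> c / 2 * D\<^sub>x"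
      proof -
        have "beta t / (2 * eta t) \<le> c / 2" using step_cond eta by (simp add: c_def field_simps)
        from mult_right_mono[OF this, of D\<^sub>x] show ?thesis by (simp add: D\<^sub>x_def)
      qed
      ultimately have "P + beta t * (G + y (Suc t) \<bullet> (A *v xb)) - beta t * E\<^sub>0
          \<le> \<Phi> + beta t * (r + y (Suc t) \<bullet> (A *v z))"
        using growth by linarith
      then show ?thesis by (simp add: DAPD_phi_finite[of g, OF 1] \<Phi>_def)
    next
      case 2
      with beta show ?thesis by (simp add: DAPD_phi_infinite)
    qed
  qed
  then show ?thesis
    unfolding xb_def[symmetric] by (simp add: P G E\<^sub>0_def mult.assoc)
qed

theorem lemma2p1:
  fixes A :: "real^'d^'n"
    and f :: "real^'n \<Rightarrow> ereal" and g :: "real^'d \<Rightarrow> ereal"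
    and gamma mu :: real
    and beta eta tau :: "nat \<Rightarrow> real"
    and x xbar :: "nat \<Rightarrow> real^'d" and y :: "nat \<Rightarrow> real^'n"
    and t :: nat
  assumes f_cl: "proper_fun f" "closed_fun f" "convex_fun f"
    and f_smooth: "gamma \<ge> 0" "smooth_fun gamma f"
    and g_cl: "proper_fun g" "closed_fun g"
    and g_sc: "mu \<ge> 0" "strongly_convex_fun mu g"
    and steps: "\<And>k. beta k > 0" "\<And>k. eta k > 0" "\<And>k. tau k > 0"
    and xbar_def: "\<And>k. is_prox (scale_fun (eta k) g) (x k - eta k *\<^sub>R (transpose A *v y k)) (xbar (Suc k))"
    and y_def: "\<And>k. is_prox (scale_fun (tau k) (conj_fun f)) (y k + tau k *\<^sub>R (A *v xbar (Suc k))) (y (Suc k))"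
    and x_def: "\<And>k. is_prox (scale_fun (\<Sum>j\<le>k. beta j) g)
                    (x 0 - (\<Sum>j\<le>k. beta j *\<^sub>R (transpose A *v y (Suc j)))) (x (Suc k))"
    and step_cond: "eta t * (1 + (\<Sum>k<t. beta k) * mu) \<ge> beta t"
  shows "DAPD_phi_star A g beta (x 0) y (Suc t)
           \<ge> DAPD_phi_star A g beta (x 0) y t
             + ereal (beta t) * (g (xbar (Suc t)) + ereal (y (Suc t) \<bullet> (A *v xbar (Suc t))))
             - ereal (beta t * (onorm (\<lambda>v. A *v v))\<^sup>2 * eta t / 2 * (norm (y (Suc t) - y t))\<^sup>2)"
proof -
  let ?gain = "ereal (beta t) * (g (xbar (Suc t)) + ereal (y (Suc t) \<bullet> (A *v xbar (Suc t))))
    - ereal (beta t * (onorm (\<lambda>v. A *v v))\<^sup>2 * eta t / 2 * (norm (y (Suc t) - y t))\<^sup>2)"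
  have "DAPD_phi_star A g beta (x 0) y t \<le> DAPD_phi A g beta (x 0) y t (x t)"
    unfolding DAPD_phi_star_def by (rule INF_lower) simp
  then have "DAPD_phi_star A g beta (x 0) y t + ?gain \<le> DAPD_phi A g beta (x 0) y t (x t) + ?gain"
    by (rule add_right_mono)
  also have "\<dots> \<le> DAPD_phi_star A g beta (x 0) y (Suc t)"
    unfolding DAPD_phi_star_def
    by (rule INF_greatest, unfold add_diff_eq_ereal)
      (rule DAPD_phi_Suc_lower_bound[where eta = eta and t = t and x = x and xbar = xbar,
          OF g_cl(1) g_sc(2,1) steps(1,2) xbar_def x_def step_cond])
  finally show ?thesis by (simp add: add_diff_eq_ereal)
qed

end
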